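(* As $N\to\infty$, $$\frac{1}{N}\sum_{n\le N} R_4(n)\sim \frac{1}{6}\log^3 N .$$
   Context: For a positive integer $n$, $R_4(n)$ denotes the number of ordered quadruples $(x,y,z,w)$ of positive integers with $n = xyzw + x + y + z + w$. *)

theory Defs
  imports Complex_Main "HOL-Library.Landau_Symbols"
begin

definition R4 :: "nat \<Rightarrow> nat" where
  "R4 n = card {(x :: nat, y :: nat, z :: nat, w :: nat).
      0 < x \<and> 0 < y \<and> 0 < z \<and> 0 < w \<and> n = x * y * z * w + x + y + z + w}"

end

theory Submission
  imports Defs "HOL-Real_Asymp.Real_Asymp"
begin

text \<open>
  The sum of R_4(n) over n \<le> N counts the quadruples of positive integers with
  xyzw + x + y + z + w \<le> N. All of them have product at most N, and since
  (x+1)(y+1)(z+1)(w+1) > xyzw + x + y + z + w, every quadruple with product at most N + 1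
  and no coordinate equal to 1 is a shifted solution. Hence the sum lies between
  D_4(N+1) - 4 D_3(N+1) and D_4(N), where D_k(m) counts the k-tuples with product at most m.
  Finally D_{k+1}(m) = m ln^k m / k! + O(m (1 + ln m)^{k-1}), by induction on k through
  D_{k+1}(m) = \<Sum>x\<le>m. D_k(m div x), comparing \<Sum>n\<le>t. ln^j(t/n) / n with the
  integral ln^{j+1} t / (j + 1).
\<close>

lemma power_diff_bounds:
  fixes x y :: real
  assumes "0 \<le> y" "y \<le> x"
  shows "real (Suc j) * y ^ j * (x - y) \<le> x ^ Suc j - y ^ Suc j"
    and "x ^ Suc j - y ^ Suc j \<le> real (Suc j) * x ^ j * (x - y)"
proof -
  have terms: "y ^ j \<le> x ^ p * y ^ (j - p) \<and> x ^ p * y ^ (j - p) \<le> x ^ j" if "p \<le> j" for p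
  proof -
    have "y ^ j = y ^ p * y ^ (j - p)" "x ^ j = x ^ p * x ^ (j - p)"
      using that by (simp_all flip: power_add)
    moreover have "y ^ p \<le> x ^ p" "y ^ (j - p) \<le> x ^ (j - p)"
      using assms by (simp_all add: power_mono)
    ultimately show ?thesis
      using assms by (auto intro!: mult_mono)
  qed
  have "(\<Sum>p<Suc j. y ^ j) \<le> (\<Sum>p<Suc j. x ^ p * y ^ (j - p))"
    and "(\<Sum>p<Suc j. x ^ p * y ^ (j - p)) \<le> (\<Sum>p<Suc j. x ^ j)"
    by (intro sum_mono; use terms in force)+
  then have "real (Suc j) * y ^ j \<le> (\<Sum>p<Suc j. x ^ p * y ^ (j - p))"
    and "(\<Sum>p<Suc j. x ^ p * y ^ (j - p)) \<le> real (Suc j) * x ^ j"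
    by simp_all
  then show "real (Suc j) * y ^ j * (x - y) \<le> x ^ Suc j - y ^ Suc j"
    and "x ^ Suc j - y ^ Suc j \<le> real (Suc j) * x ^ j * (x - y)"
    using assms unfolding diff_power_eq_sum[of x j y]
    by (simp_all add: mult.commute mult_left_mono)
qed

lemma ln_Suc_div_bounds:
  fixes n :: real
  assumes "1 \<le> n"
  shows "1 / (n + 1) \<le> ln ((n + 1) / n)" and "ln ((n + 1) / n) \<le> 1 / n"
proof -
  have "ln ((n + 1) / n) \<le> (n + 1) / n - 1" using assms by (intro ln_le_minus_one) auto
  then show "ln ((n + 1) / n) \<le> 1 / n" using assms by (simp add: field_simps)
  have "ln (n / (n + 1)) \<le> n / (n + 1) - 1" using assms by (intro ln_le_minus_one) auto
  moreover have "ln (n / (n + 1)) = - ln ((n + 1) / n)" using assms by (simp add: ln_div)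
  ultimately show "1 / (n + 1) \<le> ln ((n + 1) / n)" using assms by (simp add: field_simps)
qed

lemma ln_power_diff_bounds:
  fixes t u v :: real
  assumes "0 < u" "u \<le> v" "v \<le> t"
  shows "ln (v / u) * ln (t / v) ^ j \<le> (ln (t / u) ^ Suc j - ln (t / v) ^ Suc j) / Suc j"
    and "(ln (t / u) ^ Suc j - ln (t / v) ^ Suc j) / Suc j \<le> ln (v / u) * ln (t / u) ^ j"
proof -
  have "ln (t / u) - ln (t / v) = ln (v / u)" using assms by (simp add: ln_div)
  moreover have "0 \<le> ln (t / v)" "ln (t / v) \<le> ln (t / u)"
    using assms by (auto intro!: divide_left_mono)
  ultimately show "ln (v / u) * ln (t / v) ^ j \<le> (ln (t / u) ^ Suc j - ln (t / v) ^ Suc j) / Suc j"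
    and "(ln (t / u) ^ Suc j - ln (t / v) ^ Suc j) / Suc j \<le> ln (v / u) * ln (t / u) ^ j"
    using power_diff_bounds[of "ln (t / v)" "ln (t / u)" j]
    by (simp_all add: field_simps del: of_nat_Suc)
qed

definition harmonic_transform :: "(real \<Rightarrow> real) \<Rightarrow> real \<Rightarrow> real" where
  "harmonic_transform f t = (\<Sum>n=1..nat \<lfloor>t\<rfloor>. f (t / n) / n)"

text \<open>Each summand is squeezed between consecutive differences of ln^{j+1}(t/s) / (j + 1),
  an antiderivative of -ln^j(t/s) / s; these telescope.\<close>

lemma harmonic_transform_ln_power_bounds:
  fixes t :: real
  assumes "1 \<le> t"
  shows "ln t ^ Suc j / Suc j \<le> harmonic_transform (\<lambda>s. ln s ^ j) t"
    and "harmonic_transform (\<lambda>s. ln s ^ j) t \<le> ln t ^ Suc j / Suc j + ln t ^ j"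
  unfolding harmonic_transform_def
proof -
  define m where "m = nat \<lfloor>t\<rfloor>"
  have m: "1 \<le> m" "real m \<le> t" "t < real m + 1"
    using assms unfolding m_def by linarith+
  define g where "g x = ln (t / min x t) ^ Suc j / Suc j" for x :: real
  have g_le: "g n = ln (t / n) ^ Suc j / Suc j" if "n \<le> m" for n :: nat
    using that m unfolding g_def by (simp add: min_def)
  have "g n - g (Suc n) \<le> ln (t / n) ^ j / n" if n: "n \<in> {1..m}" for n
  proof -
    define v where "v = min (real (Suc n)) t"
    have v: "0 < real n" "real n \<le> v" "v \<le> t" "g (Suc n) = ln (t / v) ^ Suc j / Suc j"
      using n m unfolding v_def g_def by auto
    have "g n - g (Suc n) \<le> ln (v / n) * ln (t / n) ^ j"
      using ln_power_diff_bounds(2)[OF v(1-3), of j] v(4) g_le[of n] n by (simp add: diff_divide_distrib)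
    also have "\<dots> \<le> 1 / n * ln (t / n) ^ j"
    proof (rule mult_right_mono)
      have "ln (v / n) \<le> ln ((real n + 1) / n)"
        using v unfolding v_def by (auto intro!: divide_right_mono)
      also have "\<dots> \<le> 1 / n" using n by (intro ln_Suc_div_bounds) auto
      finally show "ln (v / n) \<le> 1 / n" .
      show "0 \<le> ln (t / n) ^ j" using n m by simp
    qed
    finally show ?thesis by simp
  qed
  then have "(\<Sum>n=1..m. g n - g (Suc n)) \<le> (\<Sum>n=1..m. ln (t / n) ^ j / n)"
    by (rule sum_mono)
  moreover have "(\<Sum>n=1..m. g n - g (Suc n)) = g 1 - g (Suc m)"
    using sum_Suc_diff[of 1 m "\<lambda>n. - g n"] by simp
  moreover have "g (Suc m) = 0" "g 1 = ln t ^ Suc j / Suc j"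
    using m unfolding g_def by (simp_all add: min_def)
  ultimately show "ln t ^ Suc j / Suc j \<le> (\<Sum>n=1..nat \<lfloor>t\<rfloor>. ln (t / n) ^ j / n)"
    unfolding m_def by simp
  have "ln (t / n) ^ j / n \<le> g (n - 1) - g n" if n: "n \<in> {Suc 1..m}" for n
  proof -
    have "n - 1 \<le> m" using n by auto
    have "ln (t / n) ^ j / n \<le> ln (n / real (n - 1)) * ln (t / n) ^ j"
    proof -
      have "1 \<le> real (n - 1)" using n by simp
      from ln_Suc_div_bounds(1)[OF this] have "1 / n \<le> ln (n / real (n - 1))"
        using n by simp
      moreover have "0 \<le> ln (t / n) ^ j" using n m by simp
      ultimately show ?thesis using mult_right_mono by fastforce
    qed
    also have "\<dots> \<le> g (n - 1) - g n"
      using ln_power_diff_bounds(1)[of "n - 1" n t j] n m g_le[of n] g_le[OF \<open>n - 1 \<le> m\<close>]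
      by (simp add: diff_divide_distrib)
    finally show ?thesis .
  qed
  then have "(\<Sum>n=Suc 1..m. ln (t / n) ^ j / n) \<le> (\<Sum>n=Suc 1..m. g (n - 1) - g n)"
    by (rule sum_mono)
  also have "\<dots> = g 1 - g m"
    using sum_telescope''[of 1 m "\<lambda>n. - g n"] m by simp
  also have "\<dots> \<le> g 1"
    using m g_le[of m] by simp
  finally have "(\<Sum>n=1..m. ln (t / n) ^ j / n) \<le> ln t ^ j + g 1"
    using m by (simp add: sum.atLeast_Suc_atMost)
  moreover have "g 1 = ln t ^ Suc j / Suc j"
    using m unfolding g_def by (simp add: min_def)
  ultimately show "(\<Sum>n=1..nat \<lfloor>t\<rfloor>. ln (t / n) ^ j / n) \<le> ln t ^ Suc j / Suc j + ln t ^ j"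
    unfolding m_def by simp
qed

lemma in_floor_range_divide_bounds:
  fixes t :: real
  assumes "n \<in> {1..nat \<lfloor>t\<rfloor>}"
  shows "1 \<le> t / n" and "t / n \<le> t"
proof -
  have "1 \<le> real n" "real n \<le> t"
    using assms by auto linarith
  then show "1 \<le> t / n" and "t / n \<le> t"
    by (simp_all add: le_divide_eq divide_le_eq)
qed

lemma harmonic_transform_upper:
  fixes t a b :: real and f :: "real \<Rightarrow> real"
  assumes "1 \<le> t" "0 \<le> a" "0 \<le> b"
    and f: "\<And>s. 1 \<le> s \<Longrightarrow> s \<le> t \<Longrightarrow> f s \<le> a * ln s ^ j + b"
  shows "harmonic_transform f t \<le> a * (ln t ^ Suc j / Suc j + ln t ^ j) + b * (1 + ln t)"
proof -
  have "(\<Sum>n=1..nat \<lfloor>t\<rfloor>. f (t / n) / n)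
      \<le> (\<Sum>n=1..nat \<lfloor>t\<rfloor>. a * (ln (t / n) ^ j / n) + b * (ln (t / n) ^ 0 / n))"
  proof (rule sum_mono)
    fix n assume n: "n \<in> {1..nat \<lfloor>t\<rfloor>}"
    then have "f (t / n) \<le> a * ln (t / n) ^ j + b"
      using assms in_floor_range_divide_bounds by (intro f) auto
    then show "f (t / n) / n \<le> a * (ln (t / n) ^ j / n) + b * (ln (t / n) ^ 0 / n)"
      using n by (simp add: divide_right_mono flip: add_divide_distrib)
  qed
  also have "\<dots> \<le> a * (ln t ^ Suc j / Suc j + ln t ^ j) + b * (1 + ln t)"
    unfolding sum.distrib sum_distrib_left[symmetric]
    using harmonic_transform_ln_power_bounds(2)[OF \<open>1 \<le> t\<close>, of j]
      harmonic_transform_ln_power_bounds(2)[OF \<open>1 \<le> t\<close>, of 0] assms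
    unfolding harmonic_transform_def by (intro add_mono mult_left_mono) auto
  finally show ?thesis unfolding harmonic_transform_def .
qed

lemma harmonic_transform_lower:
  fixes t a :: real and f :: "real \<Rightarrow> real"
  assumes "1 \<le> t" "0 \<le> a"
    and f: "\<And>s. 1 \<le> s \<Longrightarrow> s \<le> t \<Longrightarrow> a * ln s ^ j \<le> f s"
  shows "a * (ln t ^ Suc j / Suc j) \<le> harmonic_transform f t"
proof -
  have "a * (ln t ^ Suc j / Suc j) \<le> a * (\<Sum>n=1..nat \<lfloor>t\<rfloor>. ln (t / n) ^ j / n)"
    using harmonic_transform_ln_power_bounds(1)[OF \<open>1 \<le> t\<close>] assms
    unfolding harmonic_transform_def by (intro mult_left_mono) auto
  also have "\<dots> \<le> (\<Sum>n=1..nat \<lfloor>t\<rfloor>. f (t / n) / n)"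
    unfolding sum_distrib_left
  proof (rule sum_mono)
    fix n assume n: "n \<in> {1..nat \<lfloor>t\<rfloor>}"
    then have "a * ln (t / n) ^ j \<le> f (t / n)"
      using assms in_floor_range_divide_bounds by (intro f) auto
    then show "a * (ln (t / n) ^ j / n) \<le> f (t / n) / n"
      using n by (simp add: divide_right_mono)
  qed
  finally show ?thesis unfolding harmonic_transform_def .
qed

text \<open>Replacing \<open>m div x\<close> by \<open>m / x\<close> in the recursion of \<open>product_count\<close> below
  turns \<open>product_count k m\<close> into \<open>m * iterated_harmonic k m\<close>; inside
  \<open>iterated_harmonic\<close> the replacement is exact (\<open>iterated_harmonic_div\<close>).\<close>

fun iterated_harmonic :: "nat \<Rightarrow> real \<Rightarrow> real" where
  "iterated_harmonic 0 = (\<lambda>_. 1)"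
| "iterated_harmonic (Suc k) = harmonic_transform (iterated_harmonic k)"

lemma iterated_harmonic_nonneg: "0 \<le> iterated_harmonic k t"
  by (induction k arbitrary: t) (auto simp: harmonic_transform_def intro!: sum_nonneg divide_nonneg_nonneg)

lemma iterated_harmonic_div:
  "iterated_harmonic k (real (a div b)) = iterated_harmonic k (real a / real b)"
proof (induction k arbitrary: a b)
  case 0
  then show ?case by simp
next
  case (Suc k)
  have "iterated_harmonic k (real (a div b) / n) = iterated_harmonic k (real a / real b / n)" for n :: nat
    using Suc.IH[of "a div b" n] Suc.IH[of a "b * n"] by (simp add: div_mult2_eq)
  moreover have "nat \<lfloor>real (a div b)\<rfloor> = nat \<lfloor>real a / real b\<rfloor>"
    by (simp add: floor_divide_of_nat_eq)
  ultimately show ?case by (simp add: harmonic_transform_def)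
qed

lemma iterated_harmonic_le_one_plus_ln_power:
  assumes "1 \<le> t"
  shows "iterated_harmonic k t \<le> (1 + ln t) ^ k"
  using assms
proof (induction k arbitrary: t)
  case 0
  then show ?case by simp
next
  case (Suc k)
  have "iterated_harmonic (Suc k) t \<le> 0 * (ln t ^ Suc 0 / Suc 0 + ln t ^ 0) + (1 + ln t) ^ k * (1 + ln t)"
    unfolding iterated_harmonic.simps
  proof (rule harmonic_transform_upper)
    fix s :: real assume "1 \<le> s" "s \<le> t"
    then have "(1 + ln s) ^ k \<le> (1 + ln t) ^ k" by (intro power_mono) auto
    then show "iterated_harmonic k s \<le> 0 * ln s ^ 0 + (1 + ln t) ^ k"
      using Suc.IH[OF \<open>1 \<le> s\<close>] by simp
  qed (use Suc.prems in auto)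
  then show ?case by (simp add: mult.commute)
qed

lemma iterated_harmonic_lower:
  assumes "1 \<le> t"
  shows "ln t ^ k / fact k \<le> iterated_harmonic k t"
  using assms
proof (induction k arbitrary: t)
  case 0
  then show ?case by simp
next
  case (Suc k)
  have "1 / fact k * (ln t ^ Suc k / Suc k) \<le> iterated_harmonic (Suc k) t"
    unfolding iterated_harmonic.simps
    using Suc by (intro harmonic_transform_lower) auto
  then show ?case by (simp add: mult.commute)
qed

lemma iterated_harmonic_upper:
  assumes "1 \<le> t"
  shows "iterated_harmonic k t \<le> ln t ^ k / fact k + k * (1 + ln t) ^ (k - 1)"
  using assms
proof (induction k arbitrary: t)
  case 0
  then show ?case by simp
next
  case (Suc k)
  define b where "b = k * (1 + ln t) ^ (k - 1)"
  have "iterated_harmonic (Suc k) t \<le> 1 / fact k * (ln t ^ Suc k / Suc k + ln t ^ k) + b * (1 + ln t)"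
    unfolding iterated_harmonic.simps
  proof (rule harmonic_transform_upper)
    fix s :: real assume "1 \<le> s" "s \<le> t"
    then have "k * (1 + ln s) ^ (k - 1) \<le> b"
      unfolding b_def by (intro mult_left_mono power_mono) auto
    then show "iterated_harmonic k s \<le> 1 / fact k * ln s ^ k + b"
      using Suc.IH[OF \<open>1 \<le> s\<close>] by simp
  qed (use Suc.prems in \<open>auto simp: b_def\<close>)
  moreover have "ln t ^ k / fact k \<le> (1 + ln t) ^ k"
  proof -
    have "ln t ^ k / fact k \<le> ln t ^ k" using Suc.prems by (simp add: divide_le_eq mult_le_cancel_left1)
    also have "\<dots> \<le> (1 + ln t) ^ k" using Suc.prems by (intro power_mono) auto
    finally show ?thesis .
  qed
  moreover have "b * (1 + ln t) = k * (1 + ln t) ^ k"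
    unfolding b_def by (cases k) (simp_all add: mult.assoc mult.commute)
  ultimately show ?case by (simp add: algebra_simps)
qed

text \<open>\<open>product_count k m\<close> counts the \<open>(k + 1)\<close>-tuples of positive integers with product
  at most \<open>m\<close> (see \<open>card_triples_prod_le\<close>).\<close>

fun product_count :: "nat \<Rightarrow> nat \<Rightarrow> nat" where
  "product_count 0 m = m"
| "product_count (Suc k) m = (\<Sum>x=1..m. product_count k (m div x))"

lemma real_div_bounds: "real m / real n - 1 \<le> real (m div n)" "real (m div n) \<le> real m / real n"
proof -
  have "real (m div n) = of_int \<lfloor>real m / real n\<rfloor>"
    by (simp add: floor_divide_of_nat_eq)
  then show "real m / real n - 1 \<le> real (m div n)" "real (m div n) \<le> real m / real n"
    by linarith+
qed

lemma product_count_le: "real (product_count k m) \<le> real m * iterated_harmonic k (real m)"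
proof (induction k arbitrary: m)
  case 0
  then show ?case by simp
next
  case (Suc k)
  have "real (product_count (Suc k) m) \<le> (\<Sum>x=1..m. real (m div x) * iterated_harmonic k (real (m div x)))"
    using Suc.IH by (simp add: sum_mono)
  also have "\<dots> \<le> (\<Sum>x=1..m. real m / real x * iterated_harmonic k (real m / real x))"
    unfolding iterated_harmonic_div
    by (intro sum_mono mult_right_mono real_div_bounds iterated_harmonic_nonneg)
  also have "\<dots> = real m * iterated_harmonic (Suc k) (real m)"
    by (simp add: harmonic_transform_def sum_distrib_left)
  finally show ?case .
qed

lemma product_count_ge:
  assumes "1 \<le> m"
  shows "real m * iterated_harmonic k m - real k * m * (1 + ln m) ^ (k - 1) \<le> product_count k m"
  using assms
proof (induction k arbitrary: m)
  case 0
  then show ?case by simp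
next
  case (Suc k)
  define L where "L = ln (real m)"
  define F where "F x = iterated_harmonic k (real m / real x)" for x
  have pointwise: "real m * (F x / x) - F x - k * (1 + L) ^ (k - 1) * (m * (1 / x)) \<le> product_count k (m div x)"
    if x: "x \<in> {1..m}" for x
  proof -
    define q where "q = m div x"
    have q: "1 \<le> q" "real m / x - 1 \<le> q" "q \<le> real m / x"
      using x real_div_bounds[of m x] unfolding q_def by (auto simp: less_eq_div_iff_mult_less_eq)
    have "(1 + ln q) ^ (k - 1) \<le> (1 + L) ^ (k - 1)"
      using q unfolding L_def q_def by (intro power_mono add_left_mono ln_mono) auto
    moreover have "real k * q \<le> k * (real m / x)"
      using q(3) by (rule mult_left_mono) simp
    ultimately have "real k * q * (1 + ln q) ^ (k - 1) \<le> k * (real m / x) * (1 + L) ^ (k - 1)"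
      using q by (intro mult_mono) auto
    moreover have "(real m / x - 1) * F x \<le> q * F x"
      using q unfolding F_def by (intro mult_right_mono iterated_harmonic_nonneg)
    moreover have "q * F x - real k * q * (1 + ln q) ^ (k - 1) \<le> product_count k q"
      using Suc.IH[OF q(1)] unfolding F_def q_def iterated_harmonic_div by simp
    ultimately show ?thesis
      unfolding q_def by (simp add: algebra_simps)
  qed
  have F_le: "F x \<le> (1 + L) ^ k" if "x \<in> {1..m}" for x
  proof -
    have "1 \<le> real m / x" "real m / x \<le> m" using that by (auto simp: le_divide_eq divide_le_eq)
    then have "F x \<le> (1 + ln (real m / x)) ^ k"
      unfolding F_def by (intro iterated_harmonic_le_one_plus_ln_power)
    also have "\<dots> \<le> (1 + L) ^ k"
      using \<open>1 \<le> real m / x\<close> \<open>real m / x \<le> m\<close> unfolding L_def by (intro power_mono) auto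
    finally show ?thesis .
  qed
  have harmonic: "(\<Sum>x=1..m. 1 / real x) \<le> 1 + L"
    using harmonic_transform_ln_power_bounds(2)[of "real m" 0] Suc.prems
    unfolding L_def harmonic_transform_def by simp
  have "real m * iterated_harmonic (Suc k) m - m * (1 + L) ^ k - k * (1 + L) ^ (k - 1) * (m * (1 + L))
      \<le> (\<Sum>x=1..m. real m * (F x / x) - F x - k * (1 + L) ^ (k - 1) * (m * (1 / x)))"
  proof -
    have "(\<Sum>x=1..m. F x) \<le> (\<Sum>x=1..m. (1 + L) ^ k)"
      by (rule sum_mono) (rule F_le)
    moreover have "k * (1 + L) ^ (k - 1) * (m * (\<Sum>x=1..m. 1 / real x)) \<le> k * (1 + L) ^ (k - 1) * (m * (1 + L))"
      using harmonic Suc.prems unfolding L_def by (intro mult_left_mono) auto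
    ultimately show ?thesis
      by (simp add: harmonic_transform_def sum_subtractf sum_distrib_left F_def)
  qed
  also have "\<dots> \<le> (\<Sum>x=1..m. real (product_count k (m div x)))"
    by (rule sum_mono) (rule pointwise)
  also have "\<dots> = product_count (Suc k) m"
    by simp
  finally show ?case
    unfolding L_def by (cases k) (simp_all add: algebra_simps)
qed

lemma product_count_bounds:
  assumes "1 \<le> m"
  shows "\<bar>real (product_count k m) - m * ln m ^ k / fact k\<bar> \<le> real k * m * (1 + ln m) ^ (k - 1)"
proof -
  have "m * (ln m ^ k / fact k) \<le> m * iterated_harmonic k m"
    and "m * iterated_harmonic k m \<le> m * (ln m ^ k / fact k + k * (1 + ln m) ^ (k - 1))"
    using assms iterated_harmonic_lower iterated_harmonic_upper by (intro mult_left_mono; simp)+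
  then show ?thesis
    using product_count_le[of k m] product_count_ge[OF assms, of k] by (simp add: algebra_simps abs_le_iff)
qed

definition pairs_prod_le :: "nat \<Rightarrow> (nat \<times> nat) set" where
  "pairs_prod_le m = {(y, z). 0 < y \<and> 0 < z \<and> y * z \<le> m}"

definition triples_prod_le :: "nat \<Rightarrow> (nat \<times> nat \<times> nat) set" where
  "triples_prod_le m = {(x, y, z). 0 < x \<and> 0 < y \<and> 0 < z \<and> x * y * z \<le> m}"

definition quadruples_prod_le :: "nat \<Rightarrow> (nat \<times> nat \<times> nat \<times> nat) set" where
  "quadruples_prod_le m = {(x, y, z, w). 0 < x \<and> 0 < y \<and> 0 < z \<and> 0 < w \<and> x * y * z * w \<le> m}"

lemma Sigma_div_eq:
  fixes m :: nat and A :: "nat \<Rightarrow> 'a set"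
  assumes "A 0 = {}"
  shows "{(x, p). 0 < x \<and> p \<in> A (m div x)} = Sigma {1..m} (\<lambda>x. A (m div x))"
proof -
  have "x \<le> m" if "p \<in> A (m div x)" for x p
    using that assms by (cases "x \<le> m") auto
  then show ?thesis by auto
qed

lemma mult_le_iff_le_div: "0 < x \<Longrightarrow> x * r \<le> m \<longleftrightarrow> r \<le> m div x" for x r m :: nat
  by (simp add: less_eq_div_iff_mult_less_eq mult.commute)

lemma pairs_prod_le_eq: "pairs_prod_le m = Sigma {1..m} (\<lambda>y. {1..m div y})"
proof -
  have "pairs_prod_le m = {(y, z). 0 < y \<and> z \<in> {1..m div y}}"
    by (auto simp: pairs_prod_le_def mult_le_iff_le_div)
  also have "\<dots> = Sigma {1..m} (\<lambda>y. {1..m div y})"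
    by (rule Sigma_div_eq) simp
  finally show ?thesis .
qed

lemma triples_prod_le_eq: "triples_prod_le m = Sigma {1..m} (\<lambda>x. pairs_prod_le (m div x))"
proof -
  have "triples_prod_le m = {(x, p). 0 < x \<and> p \<in> pairs_prod_le (m div x)}"
    by (auto simp: triples_prod_le_def pairs_prod_le_def mult_le_iff_le_div mult.assoc)
  also have "\<dots> = Sigma {1..m} (\<lambda>x. pairs_prod_le (m div x))"
    by (rule Sigma_div_eq) (auto simp: pairs_prod_le_def)
  finally show ?thesis .
qed

lemma quadruples_prod_le_eq: "quadruples_prod_le m = Sigma {1..m} (\<lambda>x. triples_prod_le (m div x))"
proof -
  have "quadruples_prod_le m = {(x, p). 0 < x \<and> p \<in> triples_prod_le (m div x)}"
    by (auto simp: quadruples_prod_le_def triples_prod_le_def mult_le_iff_le_div mult.assoc)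
  also have "\<dots> = Sigma {1..m} (\<lambda>x. triples_prod_le (m div x))"
    by (rule Sigma_div_eq) (auto simp: triples_prod_le_def)
  finally show ?thesis .
qed

lemma finite_pairs_prod_le: "finite (pairs_prod_le m)"
  by (simp add: pairs_prod_le_eq)

lemma finite_triples_prod_le: "finite (triples_prod_le m)"
  by (simp add: triples_prod_le_eq finite_pairs_prod_le)

lemma finite_quadruples_prod_le: "finite (quadruples_prod_le m)"
  by (simp add: quadruples_prod_le_eq finite_triples_prod_le)

lemma card_triples_prod_le: "card (triples_prod_le m) = product_count 2 m"
  by (simp add: numeral_2_eq_2 triples_prod_le_eq pairs_prod_le_eq finite_pairs_prod_le)

lemma card_quadruples_prod_le: "card (quadruples_prod_le m) = product_count 3 m"
  by (simp add: numeral_3_eq_3 quadruples_prod_le_eq card_triples_prod_le[unfolded numeral_2_eq_2]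
      finite_triples_prod_le)

definition R4_solutions_upto :: "nat \<Rightarrow> (nat \<times> nat \<times> nat \<times> nat) set" where
  "R4_solutions_upto N = {(x, y, z, w). 0 < x \<and> 0 < y \<and> 0 < z \<and> 0 < w \<and>
      x * y * z * w + x + y + z + w \<le> N}"

lemma R4_solutions_upto_subset: "R4_solutions_upto N \<subseteq> quadruples_prod_le N"
  by (auto simp: R4_solutions_upto_def quadruples_prod_le_def)

lemma finite_R4_solutions_upto: "finite (R4_solutions_upto N)"
  using finite_subset[OF R4_solutions_upto_subset finite_quadruples_prod_le] .

lemma sum_R4_eq_card: "(\<Sum>n=1..N. R4 n) = card (R4_solutions_upto N)"
proof -
  define S where "S = R4_solutions_upto N"
  define g where "g = (\<lambda>(x, y, z, w). x * y * z * w + x + y + z + w :: nat)"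
  have "R4 n = card {p \<in> S. g p = n}" if "n \<in> {1..N}" for n
    unfolding R4_def S_def R4_solutions_upto_def g_def using that
    by (intro arg_cong[where f = card]) auto
  moreover have "g ` S \<subseteq> {1..N}"
    by (auto simp: S_def R4_solutions_upto_def g_def)
  ultimately show ?thesis
    using sum.group[of S "{1..N}" g "\<lambda>_. 1 :: nat"] finite_R4_solutions_upto
    by (simp add: S_def)
qed

lemma card_quadruples_prod_le_Suc:
  "card (quadruples_prod_le (Suc N)) \<le> card (R4_solutions_upto N) + 4 * card (triples_prod_le (Suc N))"
proof -
  define S where "S = R4_solutions_upto N"
  define T where "T = triples_prod_le (Suc N)"
  define shift where "shift = (\<lambda>(x, y, z, w). (Suc x, Suc y, Suc z, Suc w :: nat))"
  define i1 :: "nat \<times> nat \<times> nat \<Rightarrow> nat \<times> nat \<times> nat \<times> nat"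
    where "i1 = (\<lambda>(y, z, w). (1, y, z, w))"
  define i2 :: "nat \<times> nat \<times> nat \<Rightarrow> nat \<times> nat \<times> nat \<times> nat"
    where "i2 = (\<lambda>(x, z, w). (x, 1, z, w))"
  define i3 :: "nat \<times> nat \<times> nat \<Rightarrow> nat \<times> nat \<times> nat \<times> nat"
    where "i3 = (\<lambda>(x, y, w). (x, y, 1, w))"
  define i4 :: "nat \<times> nat \<times> nat \<Rightarrow> nat \<times> nat \<times> nat \<times> nat"
    where "i4 = (\<lambda>(x, y, z). (x, y, z, 1))"
  have "quadruples_prod_le (Suc N) \<subseteq> shift ` S \<union> i1 ` T \<union> i2 ` T \<union> i3 ` T \<union> i4 ` T"
  proof
    fix p assume "p \<in> quadruples_prod_le (Suc N)"
    then obtain a b c d where p: "p = (a, b, c, d)" "0 < a" "0 < b" "0 < c" "0 < d" "a * b * c * d \<le> Suc N"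
      unfolding quadruples_prod_le_def by auto
    show "p \<in> shift ` S \<union> i1 ` T \<union> i2 ` T \<union> i3 ` T \<union> i4 ` T"
    proof (cases "a = 1 \<or> b = 1 \<or> c = 1 \<or> d = 1")
      case True
      then show ?thesis
      proof (elim disjE)
        assume "a = 1"
        then have "p = i1 (b, c, d)" "(b, c, d) \<in> T" using p by (simp_all add: i1_def T_def triples_prod_le_def)
        then show ?thesis by blast
      next
        assume "b = 1"
        then have "p = i2 (a, c, d)" "(a, c, d) \<in> T" using p by (simp_all add: i2_def T_def triples_prod_le_def)
        then show ?thesis by blast
      next
        assume "c = 1"
        then have "p = i3 (a, b, d)" "(a, b, d) \<in> T" using p by (simp_all add: i3_def T_def triples_prod_le_def)
        then show ?thesis by blast
      next
        assume "d = 1"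
        then have "p = i4 (a, b, c)" "(a, b, c) \<in> T" using p by (simp_all add: i4_def T_def triples_prod_le_def)
        then show ?thesis by blast
      qed
    next
      case False
      define x y z w where "x = a - 1" and "y = b - 1" and "z = c - 1" and "w = d - 1"
      have "a = Suc x" "b = Suc y" "c = Suc z" "d = Suc w" "0 < x" "0 < y" "0 < z" "0 < w"
        using False p unfolding x_def y_def z_def w_def by auto
      moreover have "x * y * z * w + x + y + z + w + 1 \<le> Suc x * Suc y * Suc z * Suc w"
        by (simp add: algebra_simps)
      ultimately show ?thesis
        using p by (auto simp: S_def R4_solutions_upto_def shift_def image_iff)
    qed
  qed
  then have "card (quadruples_prod_le (Suc N))
      \<le> card (shift ` S \<union> i1 ` T \<union> i2 ` T \<union> i3 ` T \<union> i4 ` T)"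
    by (intro card_mono) (simp_all add: S_def T_def finite_R4_solutions_upto finite_triples_prod_le)
  also have "\<dots> \<le> card S + card T + card T + card T + card T"
    by (intro order_trans[OF card_Un_le] add_mono card_image_le)
      (simp_all add: S_def T_def finite_R4_solutions_upto finite_triples_prod_le)
  finally show ?thesis by (simp add: S_def T_def)
qed

lemma sum_R4_bounds:
  assumes "1 \<le> N"
  defines "M \<equiv> real (Suc N)"
  shows "M * ln M ^ 3 / 6 - 3 * M * (1 + ln M) ^ 2 - 4 * (M * ln M ^ 2 / 2 + 2 * M * (1 + ln M))
      \<le> (\<Sum>n=1..N. real (R4 n))"
    and "(\<Sum>n=1..N. real (R4 n)) \<le> real N * ln (real N) ^ 3 / 6 + 3 * real N * (1 + ln (real N)) ^ 2"
proof -
  have sum_eq: "(\<Sum>n=1..N. real (R4 n)) = card (R4_solutions_upto N)"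
    using sum_R4_eq_card[of N] by (metis of_nat_sum)
  have D3: "\<bar>real (product_count 3 m) - m * ln m ^ 3 / 6\<bar> \<le> 3 * m * (1 + ln m) ^ 2"
    and D2: "\<bar>real (product_count 2 m) - m * ln m ^ 2 / 2\<bar> \<le> 2 * m * (1 + ln m)"
    if "1 \<le> m" for m
    using product_count_bounds[OF that, of 3] product_count_bounds[OF that, of 2]
    by (simp_all add: fact_numeral)
  have "card (R4_solutions_upto N) \<le> card (quadruples_prod_le N)"
    by (intro card_mono finite_quadruples_prod_le R4_solutions_upto_subset)
  then show "(\<Sum>n=1..N. real (R4 n)) \<le> real N * ln (real N) ^ 3 / 6 + 3 * real N * (1 + ln (real N)) ^ 2"
    using D3[OF assms(1)] unfolding sum_eq card_quadruples_prod_le by (simp add: abs_le_iff)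
  have "real (card (quadruples_prod_le (Suc N))) \<le> card (R4_solutions_upto N) + 4 * card (triples_prod_le (Suc N))"
    using card_quadruples_prod_le_Suc[of N] by linarith
  then show "M * ln M ^ 3 / 6 - 3 * M * (1 + ln M) ^ 2 - 4 * (M * ln M ^ 2 / 2 + 2 * M * (1 + ln M))
      \<le> (\<Sum>n=1..N. real (R4 n))"
    using D3[of "Suc N"] D2[of "Suc N"] unfolding sum_eq card_quadruples_prod_le card_triples_prod_le M_def
    by (simp add: abs_le_iff)
qed

theorem theorem4:
  shows "(\<lambda>N::nat. (\<Sum>n=1..N. real (R4 n)) / real N) \<sim>[at_top] (\<lambda>N. (1/6) * (ln (real N)) ^ 3)"
proof -
  define lo where "lo N = (let M = real N + 1 in
    (M * ln M ^ 3 / 6 - 3 * M * (1 + ln M) ^ 2 - 4 * (M * ln M ^ 2 / 2 + 2 * M * (1 + ln M))) / real N)"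
    for N :: nat
  define hi where "hi N = (real N * ln (real N) ^ 3 / 6 + 3 * real N * (1 + ln (real N)) ^ 2) / real N"
    for N :: nat
  have "lo N \<le> (\<Sum>n=1..N. real (R4 n)) / real N" "(\<Sum>n=1..N. real (R4 n)) / real N \<le> hi N"
    if "1 \<le> N" for N
    using sum_R4_bounds[OF that] unfolding lo_def hi_def Let_def
    by (simp_all add: add.commute divide_right_mono)
  then have lower: "eventually (\<lambda>N. lo N \<le> (\<Sum>n=1..N. real (R4 n)) / real N) at_top"
    and upper: "eventually (\<lambda>N. (\<Sum>n=1..N. real (R4 n)) / real N \<le> hi N) at_top"
    by (auto intro: eventually_at_top_linorderI)
  have "eventually (\<lambda>N. 0 \<le> lo N) at_top" "lo \<sim>[at_top] hi"
    unfolding lo_def hi_def Let_def by real_asymp+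
  then have "(\<lambda>N. (\<Sum>n=1..N. real (R4 n)) / real N) \<sim>[at_top] hi"
    by (rule asymp_equiv_sandwich(2)[OF _ lower upper])
  also have "hi \<sim>[at_top] (\<lambda>N. (1/6) * (ln (real N)) ^ 3)"
    unfolding hi_def by real_asymp
  finally show ?thesis .
qed

end
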